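(* Let $p$ be a prime. Every group of order $p$, $p^2$ or $p^3$ has the property that each of its non-abelian subgroups $H$ satisfies $C_G(H)\le H$. A group $G$ of order $p^4$ has this property if and only if $G$ is abelian, or $G$ has maximal class (nilpotency class $3$), or $\Phi(G)=Z(G)$.
   Context: $C_G(H)$ denotes the centralizer of $H$ in $G$, $\Phi(G)$ the Frattini subgroup and $Z(G)$ the center. *)

theory Defs
  imports "HOL-Algebra.Algebra"
begin

definition centralizer :: "('a, 'b) monoid_scheme \<Rightarrow> 'a set \<Rightarrow> 'a set" where
  "centralizer G H = {g \<in> carrier G. \<forall>h \<in> H. g \<otimes>\<^bsub>G\<^esub> h = h \<otimes>\<^bsub>G\<^esub> g}"

definition group_center :: "('a, 'b) monoid_scheme \<Rightarrow> 'a set" where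
  "group_center G = centralizer G (carrier G)"

definition maximal_subgroup :: "('a, 'b) monoid_scheme \<Rightarrow> 'a set \<Rightarrow> bool" where
  "maximal_subgroup G M \<longleftrightarrow> subgroup M G \<and> M \<noteq> carrier G \<and>
     (\<forall>K. subgroup K G \<and> M \<subseteq> K \<longrightarrow> K = M \<or> K = carrier G)"

definition frattini :: "('a, 'b) monoid_scheme \<Rightarrow> 'a set" where
  "frattini G = carrier G \<inter> \<Inter> {M. maximal_subgroup G M}"

definition commutator_subgroup :: "('a, 'b) monoid_scheme \<Rightarrow> 'a set \<Rightarrow> 'a set \<Rightarrow> 'a set" where
  "commutator_subgroup G A B = generate G
     (\<Union>a \<in> A. \<Union>b \<in> B. {a \<otimes>\<^bsub>G\<^esub> b \<otimes>\<^bsub>G\<^esub> inv\<^bsub>G\<^esub> a \<otimes>\<^bsub>G\<^esub> inv\<^bsub>G\<^esub> b})"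

text \<open>Lower central series: lcs G 0 = G = gamma_1, lcs G (Suc i) = [lcs G i, G].\<close>
primrec lower_central :: "('a, 'b) monoid_scheme \<Rightarrow> nat \<Rightarrow> 'a set" where
  "lower_central G 0 = carrier G"
| "lower_central G (Suc i) = commutator_subgroup G (lower_central G i) (carrier G)"

definition nilpotency_class :: "('a, 'b) monoid_scheme \<Rightarrow> nat \<Rightarrow> bool" where
  "nilpotency_class G c \<longleftrightarrow> lower_central G c = {\<one>\<^bsub>G\<^esub>} \<and>
     (\<forall>i < c. lower_central G i \<noteq> {\<one>\<^bsub>G\<^esub>})"

definition set_commutes :: "('a, 'b) monoid_scheme \<Rightarrow> 'a set \<Rightarrow> bool" where
  "set_commutes G H \<longleftrightarrow> (\<forall>x \<in> H. \<forall>y \<in> H. x \<otimes>\<^bsub>G\<^esub> y = y \<otimes>\<^bsub>G\<^esub> x)"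

definition CC_property :: "('a, 'b) monoid_scheme \<Rightarrow> bool" where
  "CC_property G \<longleftrightarrow> (\<forall>H. subgroup H G \<and> \<not> set_commutes G H \<longrightarrow> centralizer G H \<subseteq> H)"

end

theory Submission
  imports Defs
begin

text \<open>
  In a p-group the centre is nontrivial (the class equation), and a nonabelian group satisfies
  \<open>p\<^sup>2 |Z(G)| \<le> |G|\<close> because \<open>Z(G) < C\<^sub>G(x) < G\<close> for noncentral \<open>x\<close>. Hence groups of order at
  most \<open>p\<^sup>2\<close> are abelian, a nonabelian subgroup has order at least \<open>p\<^sup>3\<close>, and for \<open>|G| \<le> p\<^sup>3\<close>
  a nonabelian subgroup is \<open>G\<close> itself.

  Let \<open>|G| = p\<^sup>4\<close> be nonabelian. If the property fails for \<open>H\<close>, then \<open>|H| = p\<^sup>3\<close> and an element of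
  \<open>C\<^sub>G(H) - H\<close> centralizes the maximal subgroup \<open>H\<close> and itself, so it is central; thus \<open>G = Z(G)H\<close>
  with \<open>H\<close> maximal and \<open>Z(G) \<not>\<subseteq> H\<close>. This is impossible if \<open>\<Phi>(G) = Z(G)\<close>, and if \<open>G\<close> has class 3,
  since then every commutator of \<open>G\<close> is one of \<open>H\<close>, central because \<open>|H| = p\<^sup>3\<close>, giving class 2.
  Conversely \<open>|Z(G)| \<in> {p, p\<^sup>2}\<close>. If \<open>|Z(G)| = p\<close>, then \<open>G/Z(G)\<close> of order \<open>p\<^sup>3\<close> has class at most 2,
  so \<open>G\<close> has class at most 3, and class 2 is excluded by counting centralizers. If \<open>|Z(G)| = p\<^sup>2\<close>,
  centralizers of noncentral elements are maximal, so \<open>\<Phi>(G) \<subseteq> Z(G)\<close>; and a maximal \<open>M\<close> missing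
  part of \<open>Z(G)\<close> satisfies \<open>G = Z(G)M\<close>, so \<open>M\<close> is nonabelian and \<open>Z(G) \<subseteq> C\<^sub>G(M) \<subseteq> M\<close>.
\<close>

abbreviation commutator :: "('a, 'b) monoid_scheme \<Rightarrow> 'a \<Rightarrow> 'a \<Rightarrow> 'a" where
  "commutator G x y \<equiv> x \<otimes>\<^bsub>G\<^esub> y \<otimes>\<^bsub>G\<^esub> inv\<^bsub>G\<^esub> x \<otimes>\<^bsub>G\<^esub> inv\<^bsub>G\<^esub> y"

lemma (in group) commutator_eq_one_iff:
  assumes "x \<in> carrier G" "y \<in> carrier G"
  shows "commutator G x y = \<one> \<longleftrightarrow> x \<otimes> y = y \<otimes> x"
proof -
  have "commutator G x y = (x \<otimes> y) \<otimes> inv (y \<otimes> x)"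
    using assms by (simp add: inv_mult_group m_assoc)
  then show ?thesis using assms by (simp add: inv_solve_right')
qed

lemma (in group) inv_commute:
  assumes "x \<in> carrier G" "y \<in> carrier G" "x \<otimes> y = y \<otimes> x"
  shows "inv x \<otimes> y = y \<otimes> inv x"
proof -
  have "inv x \<otimes> y = inv x \<otimes> (y \<otimes> x) \<otimes> inv x" using assms(1,2) by (simp add: m_assoc)
  also have "\<dots> = inv x \<otimes> (x \<otimes> y) \<otimes> inv x" by (simp only: assms(3))
  also have "\<dots> = y \<otimes> inv x" using assms(1,2) by (simp add: m_assoc[symmetric])
  finally show ?thesis .
qed

lemma (in group) mem_center_iff:
  "z \<in> group_center G \<longleftrightarrow> z \<in> carrier G \<and> (\<forall>g\<in>carrier G. z \<otimes> g = g \<otimes> z)"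
  by (auto simp: group_center_def centralizer_def)

lemma (in group) centralizer_subgroup:
  assumes "H \<subseteq> carrier G"
  shows "subgroup (centralizer G H) G"
proof
  fix x y assume x: "x \<in> centralizer G H" and y: "y \<in> centralizer G H"
  then have xy: "x \<in> carrier G" "y \<in> carrier G" by (auto simp: centralizer_def)
  have "x \<otimes> y \<otimes> h = h \<otimes> (x \<otimes> y)" if "h \<in> H" for h
  proof -
    have h: "h \<in> carrier G" using that assms by auto
    have "x \<otimes> y \<otimes> h = x \<otimes> (h \<otimes> y)" using x y that xy h by (auto simp: centralizer_def m_assoc)
    also have "\<dots> = h \<otimes> (x \<otimes> y)" using x that xy h by (auto simp: centralizer_def m_assoc[symmetric])
    finally show ?thesis .
  qed
  then show "x \<otimes> y \<in> centralizer G H" using xy by (simp add: centralizer_def)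
  have "inv x \<otimes> h = h \<otimes> inv x" if "h \<in> H" for h
    using x that assms xy by (intro inv_commute) (auto simp: centralizer_def)
  then show "inv x \<in> centralizer G H" using xy by (simp add: centralizer_def)
qed (use assms in \<open>auto simp: centralizer_def\<close>)

lemma (in group) center_subgroup: "subgroup (group_center G) G"
  unfolding group_center_def by (rule centralizer_subgroup) simp

lemma (in group) center_normal: "group_center G \<lhd> G"
  unfolding normal_inv_iff
proof (intro conjI ballI)
  fix x z assume x: "x \<in> carrier G" and z: "z \<in> group_center G"
  then have "z \<in> carrier G" "x \<otimes> z = z \<otimes> x" by (auto simp: mem_center_iff)
  then have "x \<otimes> z \<otimes> inv x = z" using x by (simp add: m_assoc)
  then show "x \<otimes> z \<otimes> inv x \<in> group_center G" using z by simp
qed (rule center_subgroup)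

lemma (in group) centralizer_eq_carrier_iff:
  assumes "x \<in> carrier G"
  shows "centralizer G {x} = carrier G \<longleftrightarrow> x \<in> group_center G"
proof
  assume "centralizer G {x} = carrier G"
  then have "\<forall>g\<in>carrier G. g \<otimes> x = x \<otimes> g" unfolding centralizer_def by blast
  then show "x \<in> group_center G" using assms by (simp add: mem_center_iff)
qed (auto simp: centralizer_def mem_center_iff)

lemma (in group) comm_group_iff_set_commutes: "comm_group G \<longleftrightarrow> set_commutes G (carrier G)"
proof
  assume "comm_group G"
  then interpret comm_group G .
  show "set_commutes G (carrier G)" by (simp add: set_commutes_def m_comm)
qed (auto intro: group_comm_groupI simp: set_commutes_def)

lemma (in group) set_commutes_iff_carrier_subset_center:
  "set_commutes G (carrier G) \<longleftrightarrow> carrier G \<subseteq> group_center G"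
  by (auto simp: set_commutes_def mem_center_iff)

lemma (in group) commutator_mult_center_left:
  assumes "a \<in> carrier G" "b \<in> carrier G" "z \<in> group_center G"
  shows "commutator G (z \<otimes> a) b = commutator G a b"
proof -
  have z: "z \<in> carrier G" "z \<otimes> a = a \<otimes> z" "z \<otimes> b = b \<otimes> z"
    using assms by (auto simp: mem_center_iff)
  have cancel: "z \<otimes> (inv z \<otimes> g) = g" if "g \<in> carrier G" for g
    using that z(1) by (simp add: m_assoc[symmetric])
  have "commutator G (z \<otimes> a) b = a \<otimes> (z \<otimes> b) \<otimes> inv z \<otimes> inv a \<otimes> inv b"
    using assms(1,2) z(1,2) by (simp add: inv_mult_group m_assoc)
  also have "\<dots> = commutator G a b"
    using assms(1,2) z(1,3) by (simp add: m_assoc cancel)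
  finally show ?thesis .
qed

lemma (in group) commutator_mult_center_right:
  assumes "a \<in> carrier G" "b \<in> carrier G" "w \<in> group_center G"
  shows "commutator G a (w \<otimes> b) = commutator G a b"
proof -
  have w: "w \<in> carrier G" "\<And>g. g \<in> carrier G \<Longrightarrow> w \<otimes> g = g \<otimes> w"
    using assms by (auto simp: mem_center_iff)
  have "a \<otimes> (w \<otimes> b) = w \<otimes> (a \<otimes> b)"
    using assms(1,2) w(1) w(2)[of a] by (simp add: m_assoc[symmetric])
  then have "commutator G a (w \<otimes> b) = w \<otimes> commutator G a b \<otimes> inv w"
    using assms(1,2) w(1) by (simp add: inv_mult_group m_assoc)
  also have "\<dots> = commutator G a b"
    using assms(1,2) w(1) w(2)[of "commutator G a b"] by (simp add: m_assoc)
  finally show ?thesis .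
qed

lemma (in group) commutator_mult_center:
  assumes "a \<in> carrier G" "b \<in> carrier G" "z \<in> group_center G" "w \<in> group_center G"
  shows "commutator G (z \<otimes> a) (w \<otimes> b) = commutator G a b"
  using assms commutator_mult_center_left commutator_mult_center_right
  by (simp add: mem_center_iff)

lemma (in group_hom) hom_commutator:
  assumes "x \<in> carrier G" "y \<in> carrier G"
  shows "h (commutator G x y) = commutator H (h x) (h y)"
  using assms by simp

lemma (in group_hom) subgroup_vimage:
  assumes "subgroup K H"
  shows "subgroup {x \<in> carrier G. h x \<in> K} G"
  using assms by (auto intro!: subgroup.intro simp: subgroup.m_closed subgroup.m_inv_closed subgroup.one_closed)

lemma (in normal) rcos_commutator:
  assumes "x \<in> carrier G" "y \<in> carrier G"
  shows "H #> commutator G x y = commutator (G Mod H) (H #> x) (H #> y)"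
proof -
  interpret group_hom G "G Mod H" "\<lambda>a. H #> a"
    by (simp add: group_hom_def group_hom_axioms_def r_coset_hom_Mod factorgroup_is_group)
  show ?thesis using hom_commutator[OF assms] .
qed

lemma (in normal) commutator_mem_iff_rcos_commute:
  assumes "x \<in> carrier G" "y \<in> carrier G"
  shows "commutator G x y \<in> H \<longleftrightarrow>
    (H #> x) \<otimes>\<^bsub>G Mod H\<^esub> (H #> y) = (H #> y) \<otimes>\<^bsub>G Mod H\<^esub> (H #> x)"
proof -
  interpret Q: group "G Mod H" by (rule factorgroup_is_group)
  have c: "commutator G x y \<in> carrier G" using assms by simp
  have "commutator G x y \<in> H \<longleftrightarrow> H #> commutator G x y = H"
    using c coset_join1 rcos_const is_group subgroup_axioms by blast
  also have "\<dots> \<longleftrightarrow> commutator (G Mod H) (H #> x) (H #> y) = \<one>\<^bsub>G Mod H\<^esub>"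
    using rcos_commutator[OF assms] by simp
  also have "\<dots> \<longleftrightarrow> (H #> x) \<otimes>\<^bsub>G Mod H\<^esub> (H #> y) = (H #> y) \<otimes>\<^bsub>G Mod H\<^esub> (H #> x)"
    using assms by (intro Q.commutator_eq_one_iff) (auto simp: carrier_FactGroup)
  finally show ?thesis .
qed

lemma (in group) card_subgroup_eq_card_conjugates_mult:
  assumes "subgroup A G" "y \<in> carrier G"
  shows "card A = card ((\<lambda>a. a \<otimes> y \<otimes> inv a) ` A) * card (A \<inter> centralizer G {y})"
proof -
  let ?\<phi> = "\<lambda>g. \<lambda>h\<in>carrier G. g \<otimes> h \<otimes> inv g"
  interpret group_action "G\<lparr>carrier := A\<rparr>" "carrier G" ?\<phi>
    by (rule group_action.induced_action[OF action_by_conjugation assms(1)])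
  have A: "A \<subseteq> carrier G" by (rule subgroup.subset[OF assms(1)])
  have "orbit (G\<lparr>carrier := A\<rparr>) ?\<phi> y = (\<lambda>a. a \<otimes> y \<otimes> inv a) ` A"
    using assms(2) by (auto simp: orbit_def)
  moreover have "stabilizer (G\<lparr>carrier := A\<rparr>) ?\<phi> y = A \<inter> centralizer G {y}"
  proof -
    have "a \<otimes> y \<otimes> inv a = y \<longleftrightarrow> a \<otimes> y = y \<otimes> a" if "a \<in> A" for a
      using that A assms(2) inv_solve_right'[of y "a \<otimes> y" a] by auto
    then show ?thesis using assms(2) A by (auto simp: stabilizer_def centralizer_def)
  qed
  ultimately show ?thesis
    using orbit_stabilizer_theorem[OF assms(2)] by (simp add: order_def)
qed

lemma (in group) card_le_card_center_mult_centralizer: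
  assumes "finite (carrier G)" "subgroup A G" "y \<in> carrier G"
    and "\<And>a. a \<in> A \<Longrightarrow> commutator G a y \<in> group_center G"
  shows "card A \<le> card (group_center G) * card (A \<inter> centralizer G {y})"
proof -
  have "(\<lambda>a. a \<otimes> y \<otimes> inv a) ` A \<subseteq> (\<lambda>z. z \<otimes> y) ` group_center G"
  proof
    fix u assume "u \<in> (\<lambda>a. a \<otimes> y \<otimes> inv a) ` A"
    then obtain a where a: "a \<in> A" "u = a \<otimes> y \<otimes> inv a" by blast
    then have "a \<in> carrier G" using subgroup.subset[OF assms(2)] by blast
    then have "u = commutator G a y \<otimes> y" using a(2) assms(3) by (simp add: m_assoc)
    then show "u \<in> (\<lambda>z. z \<otimes> y) ` group_center G" using assms(4)[OF a(1)] by blast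
  qed
  moreover have finite_center: "finite (group_center G)"
    using assms(1) finite_subset[OF subgroup.subset[OF center_subgroup]] by blast
  ultimately have "card ((\<lambda>a. a \<otimes> y \<otimes> inv a) ` A) \<le> card ((\<lambda>z. z \<otimes> y) ` group_center G)"
    by (intro card_mono) auto
  also have "\<dots> \<le> card (group_center G)" by (rule card_image_le[OF finite_center])
  finally show ?thesis
    by (subst card_subgroup_eq_card_conjugates_mult[OF assms(2,3)]) (rule mult_le_mono1)
qed

lemma (in group) commutator_in_center_mult:
  assumes "subgroup M G" "x \<in> group_center G <#> M" "y \<in> group_center G <#> M"
  obtains a b where "a \<in> M" "b \<in> M" "commutator G x y = commutator G a b"
proof -
  obtain z a w b where "z \<in> group_center G" "a \<in> M" "x = z \<otimes> a"
    and "w \<in> group_center G" "b \<in> M" "y = w \<otimes> b"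
    using assms(2,3) unfolding set_mult_def by blast
  then show ?thesis
    using that commutator_mult_center subgroup.subset[OF assms(1)] by blast
qed

lemma (in group) subset_center_mult:
  assumes "subgroup M G"
  shows "M \<subseteq> group_center G <#> M" "group_center G \<subseteq> group_center G <#> M"
proof -
  have one: "\<one> \<in> group_center G" "\<one> \<in> M"
    using subgroup.one_closed[OF center_subgroup] subgroup.one_closed[OF assms] .
  show "M \<subseteq> group_center G <#> M"
  proof
    fix m assume "m \<in> M"
    then have "m = \<one> \<otimes> m" using subgroup.subset[OF assms] by auto
    then show "m \<in> group_center G <#> M" using one \<open>m \<in> M\<close> unfolding set_mult_def by blast
  qed
  show "group_center G \<subseteq> group_center G <#> M"
  proof
    fix z assume "z \<in> group_center G"
    then have "z = z \<otimes> \<one>" by (simp add: mem_center_iff)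
    then show "z \<in> group_center G <#> M" using one \<open>z \<in> group_center G\<close> unfolding set_mult_def by blast
  qed
qed

lemma (in group) set_commutes_of_center_mult_eq_carrier:
  assumes "subgroup M G" "group_center G <#> M = carrier G" "set_commutes G M"
  shows "set_commutes G (carrier G)"
  unfolding set_commutes_def
proof (intro ballI)
  fix x y assume x: "x \<in> carrier G" and y: "y \<in> carrier G"
  have "x \<in> group_center G <#> M" "y \<in> group_center G <#> M" using x y assms(2) by simp_all
  then obtain a b where ab: "a \<in> M" "b \<in> M" "commutator G x y = commutator G a b"
    by (rule commutator_in_center_mult[OF assms(1)])
  have "a \<in> carrier G" "b \<in> carrier G" using ab subgroup.subset[OF assms(1)] by auto
  then have "commutator G a b = \<one>"
    using ab assms(3) commutator_eq_one_iff unfolding set_commutes_def by blast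
  then show "x \<otimes> y = y \<otimes> x" using ab(3) commutator_eq_one_iff x y by simp
qed

lemma (in group) center_subset_frattini:
  assumes "CC_property G" "\<not> set_commutes G (carrier G)"
  shows "group_center G \<subseteq> frattini G"
proof
  fix z assume z: "z \<in> group_center G"
  have "z \<in> M" if M: "maximal_subgroup G M" for M
  proof (rule ccontr)
    assume "z \<notin> M"
    have sM: "subgroup M G" using M by (simp add: maximal_subgroup_def)
    have "M \<subseteq> group_center G <#> M" "z \<in> group_center G <#> M"
      using subset_center_mult[OF sM] z by auto
    moreover have "subgroup (group_center G <#> M) G"
      by (rule mult_norm_subgroup[OF center_normal sM])
    ultimately have "group_center G <#> M = M \<or> group_center G <#> M = carrier G"
      using M unfolding maximal_subgroup_def by blast
    then have "group_center G <#> M = carrier G"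
      using \<open>z \<in> group_center G <#> M\<close> \<open>z \<notin> M\<close> by blast
    then have "\<not> set_commutes G M"
      using set_commutes_of_center_mult_eq_carrier[OF sM] assms(2) by blast
    then have "centralizer G M \<subseteq> M" using assms(1) sM unfolding CC_property_def by blast
    moreover have "z \<in> centralizer G M"
      using z subgroup.subset[OF sM] by (auto simp: centralizer_def mem_center_iff)
    ultimately show False using \<open>z \<notin> M\<close> by blast
  qed
  then show "z \<in> frattini G" using z by (simp add: frattini_def mem_center_iff)
qed

lemma (in group) commutator_subgroup_subset:
  assumes "subgroup K G" "\<And>a b. a \<in> A \<Longrightarrow> b \<in> B \<Longrightarrow> commutator G a b \<in> K"
  shows "commutator_subgroup G A B \<subseteq> K"
  unfolding commutator_subgroup_def using assms by (intro generate_subgroup_incl) auto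

lemma (in group) commutator_mem_commutator_subgroup:
  assumes "a \<in> A" "b \<in> B"
  shows "commutator G a b \<in> commutator_subgroup G A B"
  unfolding commutator_subgroup_def using assms by (intro generate.incl) blast

lemma (in group) lower_central_subgroup: "subgroup (lower_central G i) G"
proof (induction i)
  case (Suc i)
  then have "lower_central G i \<subseteq> carrier G" by (rule subgroup.subset)
  then show ?case
    by (auto simp: commutator_subgroup_def intro!: generate_is_subgroup)
qed (simp add: subgroup_self)

lemma (in group) lower_central_Suc_trivial_iff:
  "lower_central G (Suc i) = {\<one>} \<longleftrightarrow> lower_central G i \<subseteq> group_center G"
proof -
  have sub: "lower_central G i \<subseteq> carrier G" by (rule subgroup.subset[OF lower_central_subgroup])
  have "lower_central G (Suc i) = {\<one>} \<longleftrightarrow>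
    (\<forall>a\<in>lower_central G i. \<forall>b\<in>carrier G. commutator G a b = \<one>)"
  proof
    assume "lower_central G (Suc i) = {\<one>}"
    then show "\<forall>a\<in>lower_central G i. \<forall>b\<in>carrier G. commutator G a b = \<one>"
      using commutator_mem_commutator_subgroup by fastforce
  next
    assume "\<forall>a\<in>lower_central G i. \<forall>b\<in>carrier G. commutator G a b = \<one>"
    then have "lower_central G (Suc i) \<subseteq> {\<one>}"
      using commutator_subgroup_subset[OF triv_subgroup, of "lower_central G i" "carrier G"] by simp
    moreover have "\<one> \<in> lower_central G (Suc i)"
      by (rule subgroup.one_closed[OF lower_central_subgroup])
    ultimately show "lower_central G (Suc i) = {\<one>}" by blast
  qed
  also have "\<dots> \<longleftrightarrow> lower_central G i \<subseteq> group_center G"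
    using sub by (auto simp: mem_center_iff commutator_eq_one_iff[OF subsetD[OF sub]]) blast+
  finally show ?thesis .
qed

lemma (in group) lower_central_1_trivial_iff:
  "lower_central G 1 = {\<one>} \<longleftrightarrow> set_commutes G (carrier G)"
  using lower_central_Suc_trivial_iff[of 0] by (simp add: set_commutes_iff_carrier_subset_center)

lemma (in group) lower_central_2_trivial_iff:
  "lower_central G 2 = {\<one>} \<longleftrightarrow>
    (\<forall>x\<in>carrier G. \<forall>y\<in>carrier G. commutator G x y \<in> group_center G)"
  using lower_central_Suc_trivial_iff[of 1]
    commutator_subgroup_subset[OF center_subgroup, of "carrier G" "carrier G"]
    commutator_mem_commutator_subgroup[of _ "carrier G" _ "carrier G"]
  by (auto simp: numeral_2_eq_2)

locale p_group = group G for G (structure) +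
  fixes p n :: nat
  assumes prime_p: "Factorial_Ring.prime p" and order_eq: "order G = p ^ n"
begin

lemma one_lt_p: "1 < p"
  using prime_p prime_gt_1_nat by blast

lemma card_carrier: "card (carrier G) = p ^ n"
  using order_eq by (simp add: order_def)

lemma finite_carrier: "finite (carrier G)"
  using card_carrier one_lt_p by (intro card_ge_0_finite) simp

lemma card_subgroup_prime_power:
  assumes "subgroup H G"
  obtains k where "k \<le> n" "card H = p ^ k"
proof -
  have "card H dvd p ^ n"
    using lagrange[OF assms] order_eq by (metis dvd_triv_right)
  then show ?thesis using divides_primepow_nat[OF prime_p] that by auto
qed

lemma p_mult_card_le_of_psubset:
  assumes "subgroup A G" "subgroup B G" "A \<subset> B"
  shows "p * card A \<le> card B"
proof -
  obtain i j where i: "card A = p ^ i" and j: "card B = p ^ j"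
    using card_subgroup_prime_power assms(1,2) by metis
  have "finite B" using assms(2) finite_carrier finite_subset subgroup.subset by blast
  then have "card A < card B" using assms(3) by (rule psubset_card_mono)
  then have "i < j" using i j one_lt_p power_strict_increasing_iff by metis
  then have "p ^ Suc i \<le> p ^ j" using one_lt_p by (intro power_increasing) auto
  then show ?thesis using i j by simp
qed

lemma p_dvd_card_orbit:
  assumes "group_action G E \<phi>" "x \<in> E" "\<not> (\<forall>g\<in>carrier G. \<phi> g x = x)"
  shows "p dvd card (orbit G \<phi> x)"
proof -
  interpret group_action G E \<phi> by fact
  have "card (orbit G \<phi> x) dvd p ^ n"
    using orbit_stabilizer_theorem[OF assms(2)] order_eq by (metis dvd_triv_left)
  then obtain k where k: "card (orbit G \<phi> x) = p ^ k"
    using divides_primepow_nat[OF prime_p] by auto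
  have "k \<noteq> 0"
  proof
    assume "k = 0"
    then obtain y where "orbit G \<phi> x = {y}" using k card_1_singletonE by auto
    then have "orbit G \<phi> x = {x}" using orbit_refl[OF assms(2)] by auto
    then show False using assms(3) by (auto simp: orbit_def)
  qed
  then show ?thesis using k by simp
qed

lemma card_fixed_points_mod:
  assumes "group_action G E \<phi>" "finite E"
  shows "card {x \<in> E. \<forall>g\<in>carrier G. \<phi> g x = x} mod p = card E mod p"
proof -
  interpret group_action G E \<phi> by fact
  define F where "F = {x \<in> E. \<forall>g\<in>carrier G. \<phi> g x = x}"
  have orbit_fixed: "orbit G \<phi> x = {x}" if "x \<in> F" for x
    using that by (auto simp: F_def orbit_def) (metis one_closed)
  have orbit_free: "orbit G \<phi> x \<subseteq> E - F" if "x \<in> E - F" for x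
  proof
    fix y assume y: "y \<in> orbit G \<phi> x"
    have "y \<in> E" using y that by (auto simp: orbit_def element_image)
    moreover have "y \<notin> F"
    proof
      assume "y \<in> F"
      moreover have "x \<in> orbit G \<phi> y" using orbit_sym that y \<open>y \<in> E\<close> by blast
      ultimately show False using orbit_fixed that by auto
    qed
    ultimately show "y \<in> E - F" by blast
  qed
  let ?c = "\<lambda>x. if x \<notin> F then 1 else 0 :: nat"
  have "p dvd (\<Sum>x\<in>ob. ?c x)" if ob: "ob \<in> orbits G E \<phi>" for ob
  proof -
    obtain x where x: "x \<in> E" "ob = orbit G \<phi> x" using ob by (auto simp: orbits_def)
    show ?thesis
    proof (cases "x \<in> F")
      case True
      then show ?thesis using x orbit_fixed by simp
    next
      case False
      then have "?c y = 1" if "y \<in> ob" for y using that x orbit_free[of x] by auto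
      then have "(\<Sum>y\<in>ob. ?c y) = card ob" by simp
      then show ?thesis using False x p_dvd_card_orbit[OF assms(1)] by (simp add: F_def)
    qed
  qed
  then have "p dvd (\<Sum>x\<in>E. ?c x)"
    using disjoint_sum[OF assms(2)] by (metis dvd_sum)
  moreover have "(\<Sum>x\<in>E. ?c x) = card (E - F)"
    by (rule card_as_sums[symmetric]) (auto simp: assms(2))
  moreover have "card E = card F + card (E - F)"
  proof -
    have "F \<subseteq> E" "finite F" using assms(2) finite_subset unfolding F_def by auto
    then show ?thesis using assms(2) by (simp add: card_Diff_subset card_mono)
  qed
  ultimately obtain k where "card E = card F + p * k" by (auto elim!: dvdE)
  then show ?thesis by (simp add: F_def)
qed

lemma p_dvd_card_center:
  assumes "0 < n"
  shows "p dvd card (group_center G)"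
proof -
  let ?\<phi> = "\<lambda>g. \<lambda>h\<in>carrier G. g \<otimes> h \<otimes> inv g"
  have "{x \<in> carrier G. \<forall>g\<in>carrier G. ?\<phi> g x = x} = group_center G"
  proof -
    have "g \<otimes> x \<otimes> inv g = x \<longleftrightarrow> x \<otimes> g = g \<otimes> x" if "g \<in> carrier G" "x \<in> carrier G" for g x
      using that inv_solve_right'[of x "g \<otimes> x" g] by auto
    then show ?thesis by (auto simp: mem_center_iff)
  qed
  then have "card (group_center G) mod p = p ^ n mod p"
    using card_fixed_points_mod[OF action_by_conjugation finite_carrier] card_carrier by simp
  then show ?thesis using assms by (simp add: mod_eq_0_iff_dvd)
qed

lemma finite_center: "finite (group_center G)"
  using finite_subset[OF subgroup.subset[OF center_subgroup] finite_carrier] .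

lemma card_center_pos: "0 < card (group_center G)"
  using finite_center subgroup.one_closed[OF center_subgroup] by (auto simp: card_gt_0_iff)

lemma p_le_card_center: "0 < n \<Longrightarrow> p \<le> card (group_center G)"
  using p_dvd_card_center card_center_pos by (simp add: dvd_imp_le)

lemma p_square_mult_card_center_le:
  assumes "\<not> set_commutes G (carrier G)"
  shows "p * p * card (group_center G) \<le> p ^ n"
proof -
  obtain x y where x: "x \<in> carrier G" and y: "y \<in> carrier G" and "x \<otimes> y \<noteq> y \<otimes> x"
    using assms unfolding set_commutes_def by blast
  let ?C = "centralizer G {x}"
  have C: "subgroup ?C G" using x by (intro centralizer_subgroup) auto
  have "x \<notin> group_center G" "x \<in> ?C" "group_center G \<subseteq> ?C"
    using x y \<open>x \<otimes> y \<noteq> y \<otimes> x\<close> by (auto simp: mem_center_iff centralizer_def)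
  then have "group_center G \<subset> ?C" by blast
  then have center_le: "p * card (group_center G) \<le> card ?C"
    using p_mult_card_le_of_psubset[OF center_subgroup C] by blast
  have "y \<notin> ?C" "?C \<subseteq> carrier G"
    using \<open>x \<otimes> y \<noteq> y \<otimes> x\<close> by (auto simp: centralizer_def)
  then have "?C \<subset> carrier G" using y by blast
  then have centralizer_le: "p * card ?C \<le> p ^ n"
    using p_mult_card_le_of_psubset[OF C subgroup_self] card_carrier by simp
  have "p * p * card (group_center G) = p * (p * card (group_center G))" by simp
  also have "\<dots> \<le> p * card ?C" using center_le by simp
  also have "\<dots> \<le> p ^ n" by (rule centralizer_le)
  finally show ?thesis .
qed

lemma three_le_of_not_set_commutes:
  assumes "\<not> set_commutes G (carrier G)"
  shows "3 \<le> n"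
proof -
  have bound: "p * p * card (group_center G) \<le> p ^ n"
    by (rule p_square_mult_card_center_le[OF assms])
  have "p ^ 2 = p * p * 1" by (simp add: power2_eq_square)
  also have "\<dots> \<le> p * p * card (group_center G)"
    using card_center_pos by (intro mult_le_mono2) simp
  finally have "2 \<le> n" using bound one_lt_p power_le_imp_le_exp by (meson le_trans)
  have "p ^ 3 = p * p * p" by (simp add: power3_eq_cube)
  also have "\<dots> \<le> p * p * card (group_center G)"
    using p_le_card_center \<open>2 \<le> n\<close> by (intro mult_le_mono2) simp
  finally show ?thesis using bound one_lt_p power_le_imp_le_exp by (meson le_trans)
qed

lemma card_center_eq_p:
  assumes "n = 3" "\<not> set_commutes G (carrier G)"
  shows "card (group_center G) = p"
proof -
  have "p * p * card (group_center G) \<le> p * p * p"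
    using p_square_mult_card_center_le[OF assms(2)] assms(1) by (simp add: power3_eq_cube)
  then have "card (group_center G) \<le> p" using one_lt_p by simp
  then show ?thesis using p_le_card_center assms(1) by simp
qed

lemma p_group_FactGroup:
  assumes "N \<lhd> G" "card N = p ^ k"
  shows "p_group (G Mod N) p (n - k)"
proof -
  have N: "subgroup N G" using assms(1) normal_imp_subgroup by blast
  obtain j where "j \<le> n" "card N = p ^ j" using card_subgroup_prime_power[OF N] .
  moreover have "p ^ k = p ^ j" using assms(2) \<open>card N = p ^ j\<close> by simp
  ultimately have "k \<le> n" using one_lt_p by simp
  have "card (rcosets N) * p ^ k = p ^ (n - k) * p ^ k"
    using lagrange[OF N] assms(2) order_eq \<open>k \<le> n\<close> by (simp add: power_add[symmetric])
  then have "order (G Mod N) = p ^ (n - k)"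
    using one_lt_p by (simp add: order_def FactGroup_def)
  then show ?thesis
    using normal.factorgroup_is_group[OF assms(1)] prime_p by (simp add: p_group_def p_group_axioms_def)
qed

lemma p_group_subgroup:
  assumes "subgroup H G" "card H = p ^ k"
  shows "p_group (G\<lparr>carrier := H\<rparr>) p k"
  using subgroup_imp_group[OF assms(1)] assms(2) prime_p
  by (simp add: p_group_def p_group_axioms_def order_def)

lemma commutator_mem_center:
  assumes "n \<le> 3" "x \<in> carrier G" "y \<in> carrier G"
  shows "commutator G x y \<in> group_center G"
proof (cases "set_commutes G (carrier G)")
  case True
  then have "commutator G x y = \<one>"
    using assms(2,3) commutator_eq_one_iff unfolding set_commutes_def by blast
  then show ?thesis using subgroup.one_closed[OF center_subgroup] by simp
next
  case False
  then have "n = 3" using assms(1) three_le_of_not_set_commutes by simp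
  then have "card (group_center G) = p ^ 1" using card_center_eq_p False by simp
  then interpret Q: p_group "G Mod group_center G" p 2
    using p_group_FactGroup[OF center_normal] \<open>n = 3\<close> by fastforce
  have "set_commutes (G Mod group_center G) (carrier (G Mod group_center G))"
    using Q.three_le_of_not_set_commutes by fastforce
  then show ?thesis
    using assms(2,3) normal.commutator_mem_iff_rcos_commute[OF center_normal]
    by (simp add: set_commutes_def carrier_FactGroup)
qed

lemma p3_le_card_of_not_set_commutes:
  assumes "subgroup H G" "\<not> set_commutes G H"
  shows "p ^ 3 \<le> card H"
proof -
  obtain k where k: "card H = p ^ k" using card_subgroup_prime_power[OF assms(1)] by blast
  interpret H: p_group "G\<lparr>carrier := H\<rparr>" p k by (rule p_group_subgroup[OF assms(1) k])
  have "3 \<le> k"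
    using H.three_le_of_not_set_commutes assms(2) by (simp add: set_commutes_def)
  then show ?thesis using k one_lt_p by (simp add: power_increasing)
qed

lemma CC_property_of_le_3:
  assumes "n \<le> 3"
  shows "CC_property G"
  unfolding CC_property_def
proof (intro allI impI)
  fix H assume H: "subgroup H G \<and> \<not> set_commutes G H"
  have "card (carrier G) \<le> p ^ 3"
    using card_carrier assms one_lt_p by (simp add: power_increasing)
  also have "\<dots> \<le> card H" using p3_le_card_of_not_set_commutes H by blast
  finally have "H = carrier G"
    using card_seteq[OF finite_carrier subgroup.subset] H by blast
  then show "centralizer G H \<subseteq> H" by (auto simp: centralizer_def)
qed

end

locale p4_group = p_group +
  assumes n_eq_4: "n = 4"
begin

abbreviation Z where "Z \<equiv> group_center G"

lemma card_carrier_p4: "card (carrier G) = p ^ 4"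
  using card_carrier n_eq_4 by simp

lemma card_subgroup_eq_p3:
  assumes "subgroup K G" "p ^ 3 \<le> card K" "K \<noteq> carrier G"
  shows "card K = p ^ 3"
proof -
  obtain k where k: "k \<le> n" "card K = p ^ k"
    using card_subgroup_prime_power[OF assms(1)] .
  have "p ^ 3 \<le> p ^ k" using assms(2) k(2) by simp
  then have "3 \<le> k" using one_lt_p power_le_imp_le_exp by blast
  moreover have "k \<noteq> 4"
  proof
    assume "k = 4"
    then have "card (carrier G) \<le> card K" using k(2) card_carrier_p4 by simp
    then show False using assms(1,3) card_seteq[OF finite_carrier subgroup.subset] by blast
  qed
  ultimately show ?thesis using k n_eq_4 by (simp add: le_Suc_eq eval_nat_numeral)
qed

lemma eq_carrier_of_card_p3_psubset:
  assumes "subgroup H G" "card H = p ^ 3" "subgroup K G" "H \<subset> K"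
  shows "K = carrier G"
proof -
  have "p ^ 4 \<le> card K"
    using p_mult_card_le_of_psubset[OF assms(1,3,4)] assms(2) by (simp add: eval_nat_numeral)
  then show ?thesis
    using card_seteq[OF finite_carrier subgroup.subset[OF assms(3)]] card_carrier_p4 by simp
qed

lemma maximal_subgroup_of_card_p3:
  assumes "subgroup H G" "card H = p ^ 3"
  shows "maximal_subgroup G H"
proof -
  have "H \<noteq> carrier G" using assms(2) card_carrier_p4 one_lt_p by auto
  then show ?thesis
    unfolding maximal_subgroup_def using assms eq_carrier_of_card_p3_psubset by blast
qed

lemma not_CC_property_obtains:
  assumes "\<not> CC_property G"
  obtains H z where "subgroup H G" "\<not> set_commutes G H" "card H = p ^ 3" "z \<in> Z" "z \<notin> H"
proof -
  obtain H g where H: "subgroup H G" "\<not> set_commutes G H"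
    and g: "g \<in> centralizer G H" "g \<notin> H"
    using assms unfolding CC_property_def by blast
  have "g \<in> carrier G" using g by (simp add: centralizer_def)
  then have "card H = p ^ 3"
    using card_subgroup_eq_p3 p3_le_card_of_not_set_commutes H g(2) by blast
  moreover have "H \<subset> centralizer G {g}"
    using g H(1) subgroup.subset[OF H(1)] \<open>g \<in> carrier G\<close> by (auto simp: centralizer_def)
  then have "centralizer G {g} = carrier G"
    using eq_carrier_of_card_p3_psubset[OF H(1) \<open>card H = p ^ 3\<close>] \<open>g \<in> carrier G\<close>
    by (simp add: centralizer_subgroup)
  then have "g \<in> Z" using centralizer_eq_carrier_iff \<open>g \<in> carrier G\<close> by blast
  ultimately show ?thesis using that H g(2) by blast
qed

lemma center_mult_eq_carrier:
  assumes "subgroup H G" "card H = p ^ 3" "z \<in> Z" "z \<notin> H"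
  shows "Z <#> H = carrier G"
proof -
  have "H \<subset> Z <#> H" using subset_center_mult[OF assms(1)] assms(3,4) by blast
  then show ?thesis
    by (rule eq_carrier_of_card_p3_psubset[OF assms(1,2) mult_norm_subgroup[OF center_normal assms(1)]])
qed

lemma card_center_cases:
  assumes "\<not> set_commutes G (carrier G)"
  shows "card Z = p \<or> card Z = p ^ 2"
proof -
  obtain k where k: "k \<le> n" "card Z = p ^ k"
    using card_subgroup_prime_power[OF center_subgroup] .
  have "1 \<le> k"
    using p_le_card_center n_eq_4 k(2) one_lt_p by (cases k) auto
  moreover have "p ^ (k + 2) \<le> p ^ 4"
    using p_square_mult_card_center_le[OF assms] k(2) n_eq_4 by (simp add: power_add power2_eq_square mult.commute)
  then have "k + 2 \<le> 4" using one_lt_p power_le_imp_le_exp by blast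
  ultimately have "k = 1 \<or> k = 2" by auto
  then show ?thesis using k(2) by auto
qed

lemma card_centralizer_eq_p3:
  assumes central: "\<And>x y. x \<in> carrier G \<Longrightarrow> y \<in> carrier G \<Longrightarrow> commutator G x y \<in> Z"
    and "card Z = p" "u \<in> carrier G" "u \<notin> Z"
  shows "card (centralizer G {u}) = p ^ 3"
proof -
  have "p * p ^ 3 \<le> p * card (centralizer G {u})"
    using card_le_card_center_mult_centralizer[OF finite_carrier subgroup_self assms(3)]
      central assms(3) card_carrier_p4 \<open>card Z = p\<close>
    by (simp add: Int_absorb1 centralizer_def eval_nat_numeral)
  then show ?thesis
    using card_subgroup_eq_p3 centralizer_subgroup centralizer_eq_carrier_iff assms(3,4) one_lt_p
    by simp
qed

lemma set_commutes_of_commutators_central: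
  assumes central: "\<And>x y. x \<in> carrier G \<Longrightarrow> y \<in> carrier G \<Longrightarrow> commutator G x y \<in> Z"
    and "card Z = p"
  shows "set_commutes G (carrier G)"
proof (rule ccontr)
  assume "\<not> set_commutes G (carrier G)"
  then obtain x y where x: "x \<in> carrier G" and y: "y \<in> carrier G" and "x \<otimes> y \<noteq> y \<otimes> x"
    unfolding set_commutes_def by blast
  have card_centralizer: "card (centralizer G {u}) = p ^ 3" if "u \<in> carrier G" "u \<notin> Z" for u
    by (intro card_centralizer_eq_p3 central) (simp_all add: \<open>card Z = p\<close> that)
  \<comment> \<open>A noncentral \<open>w\<close> centralizing \<open>x\<close> and \<open>y\<close> makes \<open>C\<^sub>G(w)\<close> a nonabelian group of order
    \<open>p\<^sup>3\<close> whose centre contains \<open>Z\<close> and \<open>w\<close>, too many elements.\<close>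
  let ?Cx = "centralizer G {x}" and ?Cy = "centralizer G {y}"
  have Cx: "subgroup ?Cx G" using x by (intro centralizer_subgroup) auto
  have "x \<notin> Z" using x y \<open>x \<otimes> y \<noteq> y \<otimes> x\<close> by (auto simp: mem_center_iff)
  have "card ?Cx \<le> card Z * card (?Cx \<inter> ?Cy)"
    by (rule card_le_card_center_mult_centralizer[OF finite_carrier Cx y])
      (use central subgroup.subset[OF Cx] y in blast)
  then have "p * (p * p) \<le> p * card (?Cx \<inter> ?Cy)"
    using card_centralizer[OF x \<open>x \<notin> Z\<close>] \<open>card Z = p\<close> by (simp add: power3_eq_cube mult.assoc)
  then have "p * p \<le> card (?Cx \<inter> ?Cy)" using one_lt_p by simp
  moreover have "p < p * p" using one_lt_p by simp
  ultimately have "\<not> ?Cx \<inter> ?Cy \<subseteq> Z"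
    using card_mono[OF finite_center] \<open>card Z = p\<close> by (metis leD order_trans)
  then obtain w where w: "w \<in> ?Cx" "w \<in> ?Cy" "w \<notin> Z" by blast
  have "w \<in> carrier G" using w by (simp add: centralizer_def)
  let ?K = "centralizer G {w}"
  have K: "subgroup ?K G" using \<open>w \<in> carrier G\<close> by (intro centralizer_subgroup) auto
  interpret K: p_group "G\<lparr>carrier := ?K\<rparr>" p 3
    by (rule p_group_subgroup[OF K card_centralizer[OF \<open>w \<in> carrier G\<close> w(3)]])
  have "x \<in> ?K" "y \<in> ?K" using w x y by (auto simp: centralizer_def)
  then have "\<not> set_commutes (G\<lparr>carrier := ?K\<rparr>) (carrier (G\<lparr>carrier := ?K\<rparr>))"
    using \<open>x \<otimes> y \<noteq> y \<otimes> x\<close> unfolding set_commutes_def by auto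
  then have "card (group_center (G\<lparr>carrier := ?K\<rparr>)) = p" by (intro K.card_center_eq_p) simp
  moreover have "insert w Z \<subseteq> group_center (G\<lparr>carrier := ?K\<rparr>)"
    using \<open>w \<in> carrier G\<close> by (auto simp: group_center_def centralizer_def mem_center_iff)
  then have "card (insert w Z) \<le> card (group_center (G\<lparr>carrier := ?K\<rparr>))"
    by (rule card_mono[OF K.finite_center])
  moreover have "card (insert w Z) = p + 1"
    using w(3) \<open>card Z = p\<close> finite_center by simp
  ultimately show False by simp
qed

lemma nilpotency_class_3_of_card_center:
  assumes "\<not> set_commutes G (carrier G)" "card Z = p"
  shows "nilpotency_class G 3"
proof -
  interpret Q: p_group "G Mod Z" p 3
    using p_group_FactGroup[OF center_normal, of 1] assms(2) n_eq_4 by simp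
  interpret \<pi>: group_hom G "G Mod Z" "\<lambda>a. Z #> a"
    by (simp add: group_hom_def group_hom_axioms_def normal.r_coset_hom_Mod[OF center_normal] Q.is_group)
  let ?Z2 = "{a \<in> carrier G. Z #> a \<in> group_center (G Mod Z)}"
  \<comment> \<open>the second centre; \<open>G/Z\<close> has order \<open>p\<^sup>3\<close>, so its commutators are central\<close>
  have "commutator G x y \<in> ?Z2" if "x \<in> carrier G" "y \<in> carrier G" for x y
    using that normal.rcos_commutator[OF center_normal] Q.commutator_mem_center
    by (simp add: carrier_FactGroup)
  then have "lower_central G 1 \<subseteq> ?Z2"
    by (simp add: commutator_subgroup_subset \<pi>.subgroup_vimage[OF Q.center_subgroup])
  moreover have "commutator G a b \<in> Z" if "a \<in> ?Z2" "b \<in> carrier G" for a b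
    using that normal.commutator_mem_iff_rcos_commute[OF center_normal]
    by (simp add: Q.mem_center_iff carrier_FactGroup)
  moreover have "lower_central G 2 = commutator_subgroup G (lower_central G 1) (carrier G)"
    by (simp add: numeral_2_eq_2)
  ultimately have "lower_central G 2 \<subseteq> Z"
    using commutator_subgroup_subset[OF center_subgroup, of "lower_central G 1" "carrier G"] by blast
  then have "lower_central G 3 = {\<one>}"
    using lower_central_Suc_trivial_iff[of 2] by (simp add: numeral_3_eq_3)
  moreover have "lower_central G 2 \<noteq> {\<one>}"
    using lower_central_2_trivial_iff set_commutes_of_commutators_central assms by blast
  moreover have "lower_central G 1 \<noteq> {\<one>}"
    using lower_central_1_trivial_iff assms(1) by blast
  moreover have "lower_central G 0 \<noteq> {\<one>}"
  proof
    assume "lower_central G 0 = {\<one>}"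
    then have "p ^ 4 = 1" using card_carrier_p4 by simp
    then show False using one_lt_p by simp
  qed
  ultimately show ?thesis
    unfolding nilpotency_class_def by (auto simp: less_Suc_eq eval_nat_numeral)
qed

lemma frattini_subset_center:
  assumes "card Z = p ^ 2"
  shows "frattini G \<subseteq> Z"
proof
  fix y assume y: "y \<in> frattini G"
  then have "y \<in> carrier G" by (simp add: frattini_def)
  have "y \<otimes> c = c \<otimes> y" if c: "c \<in> carrier G" for c
  proof (cases "c \<in> Z")
    case True
    then show ?thesis using \<open>y \<in> carrier G\<close> by (simp add: mem_center_iff)
  next
    case False
    let ?C = "centralizer G {c}"
    have C: "subgroup ?C G" using c by (intro centralizer_subgroup) auto
    have "Z \<subseteq> ?C" "c \<in> ?C" using c by (auto simp: mem_center_iff centralizer_def)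
    then have "Z \<subset> ?C" using False by blast
    then have "p ^ 3 \<le> card ?C"
      using p_mult_card_le_of_psubset[OF center_subgroup C] assms by (simp add: eval_nat_numeral)
    moreover have "?C \<noteq> carrier G" using centralizer_eq_carrier_iff[OF c] False by simp
    ultimately have "maximal_subgroup G ?C"
      using card_subgroup_eq_p3[OF C] maximal_subgroup_of_card_p3[OF C] by simp
    then have "y \<in> ?C" using y by (simp add: frattini_def)
    then show ?thesis by (simp add: centralizer_def)
  qed
  then show "y \<in> Z" using \<open>y \<in> carrier G\<close> by (simp add: mem_center_iff)
qed

lemma CC_property_of_nilpotency_class_3:
  assumes "nilpotency_class G 3"
  shows "CC_property G"
proof (rule ccontr)
  assume "\<not> CC_property G"
  then obtain H z where H: "subgroup H G" "\<not> set_commutes G H" "card H = p ^ 3" "z \<in> Z" "z \<notin> H"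
    by (rule not_CC_property_obtains)
  interpret H: p_group "G\<lparr>carrier := H\<rparr>" p 3 by (rule p_group_subgroup[OF H(1,3)])
  have ZH: "Z <#> H = carrier G" by (rule center_mult_eq_carrier[OF H(1,3-5)])
  have H_central: "commutator G a b \<otimes> h = h \<otimes> commutator G a b" if "a \<in> H" "b \<in> H" "h \<in> H" for a b h
    using H.commutator_mem_center[of a b] that H(1) by (simp add: H.mem_center_iff)
  have "commutator G x y \<in> Z" if "x \<in> carrier G" "y \<in> carrier G" for x y
  proof -
    have "x \<in> Z <#> H" "y \<in> Z <#> H" using that ZH by simp_all
    then obtain a b where ab: "a \<in> H" "b \<in> H" "commutator G x y = commutator G a b"
      by (rule commutator_in_center_mult[OF H(1)])
    let ?k = "commutator G a b"
    have k: "?k \<in> carrier G" using ab(1,2) subgroup.subset[OF H(1)] by auto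
    have C: "subgroup (centralizer G {?k}) G" using k by (intro centralizer_subgroup) auto
    have "H \<subseteq> centralizer G {?k}" "Z \<subseteq> centralizer G {?k}"
      using H_central[OF ab(1,2)] subgroup.subset[OF H(1)] k by (auto simp: centralizer_def mem_center_iff)
    then have "Z <#> H \<subseteq> centralizer G {?k}"
      using subgroup.m_closed[OF C] unfolding set_mult_def by blast
    then have "centralizer G {?k} = carrier G" using ZH subgroup.subset[OF C] by blast
    then show ?thesis using centralizer_eq_carrier_iff[OF k] ab(3) by simp
  qed
  then have "lower_central G 2 = {\<one>}" using lower_central_2_trivial_iff by blast
  then show False using assms unfolding nilpotency_class_def by auto
qed

lemma CC_property_of_frattini_eq_center:
  assumes "frattini G = Z"
  shows "CC_property G"
proof (rule ccontr)
  assume "\<not> CC_property G"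
  then obtain H z where "subgroup H G" "card H = p ^ 3" "z \<in> Z" "z \<notin> H"
    by (rule not_CC_property_obtains)
  then have "maximal_subgroup G H" "z \<in> frattini G"
    using maximal_subgroup_of_card_p3 assms by simp_all
  then show False using \<open>z \<notin> H\<close> by (simp add: frattini_def)
qed

theorem CC_property_iff:
  "CC_property G \<longleftrightarrow> comm_group G \<or> nilpotency_class G 3 \<or> frattini G = Z"
proof (cases "set_commutes G (carrier G)")
  case True
  then have "CC_property G"
    using subgroup.subset unfolding CC_property_def set_commutes_def by blast
  then show ?thesis using True comm_group_iff_set_commutes by blast
next
  case False
  show ?thesis
  proof
    assume "CC_property G"
    from card_center_cases[OF False]
    show "comm_group G \<or> nilpotency_class G 3 \<or> frattini G = Z"
    proof
      assume "card Z = p"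
      then show ?thesis using nilpotency_class_3_of_card_center[OF False] by blast
    next
      assume "card Z = p ^ 2"
      then have "frattini G = Z"
        using frattini_subset_center center_subset_frattini[OF \<open>CC_property G\<close> False] by blast
      then show ?thesis by blast
    qed
  next
    assume "comm_group G \<or> nilpotency_class G 3 \<or> frattini G = Z"
    then show "CC_property G"
      using False comm_group_iff_set_commutes CC_property_of_nilpotency_class_3
        CC_property_of_frattini_eq_center by blast
  qed
qed

end

theorem lemma6p9:
  fixes p :: nat
  assumes "Factorial_Ring.prime p"
  shows "(\<forall>G :: ('a, 'b) monoid_scheme. group G \<and> order G \<in> {p, p ^ 2, p ^ 3} \<longrightarrow> CC_property G)
    \<and> (\<forall>G :: ('c, 'd) monoid_scheme. group G \<and> order G = p ^ 4 \<longrightarrow>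
         (CC_property G \<longleftrightarrow>
            comm_group G \<or> nilpotency_class G 3 \<or> frattini G = group_center G))"
proof (intro conjI allI impI)
  fix G :: "('a, 'b) monoid_scheme"
  assume G: "group G \<and> order G \<in> {p, p ^ 2, p ^ 3}"
  then obtain k where "k \<le> 3" "order G = p ^ k"
    by (auto intro: that[of 1] that[of 2] that[of 3])
  then interpret p_group G p k
    using G assms by (simp add: p_group_def p_group_axioms_def)
  show "CC_property G" by (rule CC_property_of_le_3) fact
next
  fix G :: "('c, 'd) monoid_scheme"
  assume "group G \<and> order G = p ^ 4"
  then interpret p4_group G p 4
    using assms by (simp add: p4_group_def p4_group_axioms_def p_group_def p_group_axioms_def)
  show "CC_property G \<longleftrightarrow> comm_group G \<or> nilpotency_class G 3 \<or> frattini G = group_center G"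
    by (rule CC_property_iff)
qed

end
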